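(* Let $f:G\to H$ be a locally sectionable group homomorphism. Then $\mathrm{sec}(f)\leq \sigma_c(H)$.
   Context: For a homomorphism $f:G\to H$ and a subgroup $L\le H$, a local section of $f$ on $L$ is a homomorphism $s:L\to G$ with $f\circ s=\mathrm{incl}_L$ (the inclusion $L\hookrightarrow H$). $f$ is locally sectionable if for every $b\in H$, $b\neq 1$, there is a subgroup $L\le H$ containing $b$ on which $f$ admits a local section. The sectional number $\mathrm{sec}(f)$ is the least positive integer $m$ such that there exist proper subgroups $H_1,\ldots,H_m$ of $H$ with $H=H_1\cup\cdots\cup H_m$ and such that $f$ admits a local section on each $H_i$; $\mathrm{sec}(f)=\infty$ if no such $m$ exists. The cyclic covering number $\sigma_c(H)$ is the least positive integer $m$ such that $H$ is a union of $m$ cyclic proper subgroups; $\sigma_c(H)=\infty$ if no such $m$ exists. *)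

theory Defs
  imports "HOL-Algebra.Algebra" "HOL-Library.Extended_Nat"
begin

definition local_section ::
  "('a, 'c) monoid_scheme \<Rightarrow> ('b, 'd) monoid_scheme \<Rightarrow> ('a \<Rightarrow> 'b) \<Rightarrow> 'b set \<Rightarrow> ('b \<Rightarrow> 'a) \<Rightarrow> bool"
  where "local_section G H f L s \<longleftrightarrow>
           s \<in> hom (H\<lparr>carrier := L\<rparr>) G \<and> (\<forall>x\<in>L. f (s x) = x)"

definition has_local_section ::
  "('a, 'c) monoid_scheme \<Rightarrow> ('b, 'd) monoid_scheme \<Rightarrow> ('a \<Rightarrow> 'b) \<Rightarrow> 'b set \<Rightarrow> bool"
  where "has_local_section G H f L \<longleftrightarrow> subgroup L H \<and> (\<exists>s. local_section G H f L s)"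

definition locally_sectionable ::
  "('a, 'c) monoid_scheme \<Rightarrow> ('b, 'd) monoid_scheme \<Rightarrow> ('a \<Rightarrow> 'b) \<Rightarrow> bool"
  where "locally_sectionable G H f \<longleftrightarrow>
           (\<forall>b\<in>carrier H. b \<noteq> \<one>\<^bsub>H\<^esub> \<longrightarrow> (\<exists>L. b \<in> L \<and> has_local_section G H f L))"

text \<open>Least positive m such that H is the union of m proper subgroups on each of which
  f admits a local section; \<infinity> (= Inf of the empty set in enat) if none exists.\<close>
definition sectional_number ::
  "('a, 'c) monoid_scheme \<Rightarrow> ('b, 'd) monoid_scheme \<Rightarrow> ('a \<Rightarrow> 'b) \<Rightarrow> enat"
  where "sectional_number G H f = Inf {enat m | m. 0 < m \<and>
           (\<exists>K :: nat \<Rightarrow> 'b set.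
              (\<forall>i<m. subgroup (K i) H \<and> K i \<noteq> carrier H \<and> has_local_section G H f (K i)) \<and>
              carrier H = (\<Union>i<m. K i))}"

definition cyclic_subgroup :: "('b, 'd) monoid_scheme \<Rightarrow> 'b set \<Rightarrow> bool"
  where "cyclic_subgroup H K \<longleftrightarrow> (\<exists>g\<in>carrier H. K = generate H {g})"

definition cyclic_covering_number :: "('b, 'd) monoid_scheme \<Rightarrow> enat"
  where "cyclic_covering_number H = Inf {enat m | m. 0 < m \<and>
           (\<exists>K :: nat \<Rightarrow> 'b set.
              (\<forall>i<m. subgroup (K i) H \<and> cyclic_subgroup H (K i) \<and> K i \<noteq> carrier H) \<and>
              carrier H = (\<Union>i<m. K i))}"

end

theory Submission
  imports Defs
begin

text \<open>Local sections restrict to subgroups, and every cyclic subgroup of H lies in a subgroup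
  carrying a local section (the trivial one carries the constant section). Hence every covering
  of H by proper cyclic subgroups is admissible in the definition of the sectional number.\<close>

lemma has_local_section_subgroup:
  assumes "has_local_section G H f L" and "subgroup K H" and "K \<subseteq> L"
  shows "has_local_section G H f K"
proof -
  from assms(1) obtain s where s: "s \<in> hom (H\<lparr>carrier := L\<rparr>) G" "\<forall>x\<in>L. f (s x) = x"
    unfolding has_local_section_def local_section_def by blast
  have "s \<in> hom (H\<lparr>carrier := K\<rparr>) G"
    using s(1) assms(3) unfolding hom_def by (auto simp: Pi_iff subset_iff)
  with s(2) assms(2,3) show ?thesis
    unfolding has_local_section_def local_section_def by blast
qed

lemma has_local_section_trivial_subgroup:
  assumes "group G" and "group H" and "f \<in> hom G H"
  shows "has_local_section G H f {\<one>\<^bsub>H\<^esub>}"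
proof -
  have "(\<lambda>_. \<one>\<^bsub>G\<^esub>) \<in> hom (H\<lparr>carrier := {\<one>\<^bsub>H\<^esub>}\<rparr>) G"
    using assms(1) unfolding hom_def by (auto simp: group.is_monoid)
  moreover have "f \<one>\<^bsub>G\<^esub> = \<one>\<^bsub>H\<^esub>"
    using assms by (simp add: group_hom.hom_one group_hom_axioms_def group_hom_def)
  ultimately show ?thesis
    using group.triv_subgroup[OF assms(2)]
    unfolding has_local_section_def local_section_def by auto
qed

lemma locally_sectionable_cyclic_subgroup:
  assumes "group G" and "group H" and "f \<in> hom G H" and "locally_sectionable G H f"
    and "cyclic_subgroup H K"
  shows "has_local_section G H f K"
proof -
  from assms(5) obtain g where g: "g \<in> carrier H" and K: "K = generate H {g}"
    unfolding cyclic_subgroup_def by blast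
  have K_subgroup: "subgroup K H"
    using group.generate_is_subgroup[OF assms(2)] g K by auto
  obtain L where "has_local_section G H f L" and "g \<in> L"
  proof (cases "g = \<one>\<^bsub>H\<^esub>")
    case True
    then show ?thesis
      using that has_local_section_trivial_subgroup[OF assms(1-3)] by blast
  next
    case False
    then show ?thesis
      using that assms(4) g unfolding locally_sectionable_def by blast
  qed
  moreover from this have "K \<subseteq> L"
    using group.generate_subgroup_incl[OF assms(2)] K unfolding has_local_section_def by auto
  ultimately show ?thesis
    using has_local_section_subgroup K_subgroup by blast
qed

theorem theorem2p20:
  fixes G :: "('a, 'c) monoid_scheme" and H :: "('b, 'd) monoid_scheme" and f :: "'a \<Rightarrow> 'b"
  assumes "group G" and "group H" and "f \<in> hom G H"
    and "locally_sectionable G H f"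
  shows "sectional_number G H f \<le> cyclic_covering_number H"
  unfolding sectional_number_def cyclic_covering_number_def
  using locally_sectionable_cyclic_subgroup[OF assms]
  by (intro Inf_superset_mono) blast

end
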